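(* Let $\rho,\sigma,\gamma$ be qubit density matrices written in the energy eigenbasis as $\rho=\begin{pmatrix} r & a \\ \bar{a} & 1-r\end{pmatrix}$, $\sigma=\begin{pmatrix} s & b \\ \bar{b} & 1-s\end{pmatrix}$, $\gamma=\begin{pmatrix} g & 0 \\ 0 & 1-g\end{pmatrix}$, with diagonal vectors $\mathbf{r}=(r,1-r)^T$, $\mathbf{s}=(s,1-s)^T$, $\mathbf{g}=(g,1-g)^T$, and suppose $a\neq 0$ and $g\neq\frac12$. Then, for $\mathbf{r}\neq \mathbf{g}$, $(\rho,\gamma)\xrightarrow{{\rm GPC}}(\sigma,\gamma)$ if and only if $(\mathbf{r},\mathbf{g})\succ (\mathbf{s},\mathbf{g})$ and \[ \frac{|b|^2}{|a|^2}\leq\frac{\det\begin{pmatrix} s & 1-r \\ g & 1-g\end{pmatrix}\det\begin{pmatrix} r & 1-s \\ g & 1-g\end{pmatrix}}{\left(r-g\right)^2}. \] For $\mathbf{r}=\mathbf{g}$, $(\rho,\gamma)\xrightarrow{{\rm GPC}}(\sigma,\gamma)$ if and only if $\mathbf{s}=\mathbf{g}$ and $|a|\geq |b|$.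
   Context: Setting: a qubit system $A$ with a well-defined (non-degenerate) Hamiltonian $H^A$ and inverse temperature $\beta$; $\gamma=e^{-\beta H^A}/{\rm Tr}[e^{-\beta H^A}]$ is the Gibbs state, diagonal in the energy eigenbasis $\{|0\rangle,|1\rangle\}$. An athermality state is a pair $(\rho,\gamma)$. ${\rm GPC}$ denotes the set of Gibbs-preserving covariant channels: quantum channels $\mathcal{E}$ with $\mathcal{E}(\gamma)=\gamma$ that are time-translation covariant, i.e. $\mathcal{E}(e^{-iH^At}\rho e^{iH^At})=e^{-iH^At}\mathcal{E}(\rho)e^{iH^At}$ for all $t\in\mathbb{R}$. The notation $(\rho,\gamma)\xrightarrow{{\rm GPC}}(\sigma,\gamma)$ means there exists $\mathcal{E}\in{\rm GPC}$ with $\mathcal{E}(\rho)=\sigma$. Relative majorization $(\mathbf{r},\mathbf{g})\succ(\mathbf{s},\mathbf{g})$ means there exists a column stochastic matrix $E$ with $E\mathbf{r}=\mathbf{s}$ and $E\mathbf{g}=\mathbf{g}$. (The cases $a=0$ or $g=\frac12$ reduce to the quasi-classical regime and are excluded.) *)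

theory Defs
  imports "HOL-Analysis.Analysis" "Jordan_Normal_Form.Matrix" "Jordan_Normal_Form.Determinant"
begin

type_synonym cmat = "complex mat"

definition mtrace :: "cmat \<Rightarrow> complex" where
  "mtrace M = (\<Sum>i<dim_row M. M $$ (i, i))"

definition madj :: "cmat \<Rightarrow> cmat" where
  "madj M = mat (dim_col M) (dim_row M) (\<lambda>(i, j). cnj (M $$ (j, i)))"

definition psd :: "nat \<Rightarrow> cmat \<Rightarrow> bool" where
  "psd n M \<longleftrightarrow> M \<in> carrier_mat n n \<and>
     (\<forall>v \<in> carrier_vec n.
        let q = (\<Sum>i<n. \<Sum>j<n. cnj (v $ i) * M $$ (i, j) * v $ j) in Im q = 0 \<and> Re q \<ge> 0)"

definition density :: "cmat \<Rightarrow> bool" where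
  "density M \<longleftrightarrow> psd 2 M \<and> mtrace M = 1"

definition linear_map2 :: "(cmat \<Rightarrow> cmat) \<Rightarrow> bool" where
  "linear_map2 E \<longleftrightarrow>
     (\<forall>X \<in> carrier_mat 2 2. E X \<in> carrier_mat 2 2) \<and>
     (\<forall>X \<in> carrier_mat 2 2. \<forall>Y \<in> carrier_mat 2 2. \<forall>c d :: complex.
         E (c \<cdot>\<^sub>m X + d \<cdot>\<^sub>m Y) = c \<cdot>\<^sub>m E X + d \<cdot>\<^sub>m E Y)"

text \<open>The 2x2 block (p,q) of a (2k)x(2k) matrix, and the action of E \<otimes> id_k
  (system index fast, ancilla index = block index).\<close>
definition blk :: "cmat \<Rightarrow> nat \<Rightarrow> nat \<Rightarrow> cmat" where
  "blk M p q = mat 2 2 (\<lambda>(\<alpha>, \<beta>). M $$ (2 * p + \<alpha>, 2 * q + \<beta>))"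

definition ext_map :: "(cmat \<Rightarrow> cmat) \<Rightarrow> nat \<Rightarrow> cmat \<Rightarrow> cmat" where
  "ext_map E k M = mat (2 * k) (2 * k)
     (\<lambda>(i, j). E (blk M (i div 2) (j div 2)) $$ (i mod 2, j mod 2))"

definition completely_positive :: "(cmat \<Rightarrow> cmat) \<Rightarrow> bool" where
  "completely_positive E \<longleftrightarrow>
     (\<forall>k::nat. \<forall>M. psd (2 * k) M \<longrightarrow> psd (2 * k) (ext_map E k M))"

definition trace_preserving :: "(cmat \<Rightarrow> cmat) \<Rightarrow> bool" where
  "trace_preserving E \<longleftrightarrow> (\<forall>X \<in> carrier_mat 2 2. mtrace (E X) = mtrace X)"

definition quantum_channel :: "(cmat \<Rightarrow> cmat) \<Rightarrow> bool" where
  "quantum_channel E \<longleftrightarrow> linear_map2 E \<and> completely_positive E \<and> trace_preserving E"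

text \<open>Hamiltonian H = diag(E0,E1) in its energy eigenbasis; U_t = exp(-i H t).\<close>
definition evol :: "real \<Rightarrow> real \<Rightarrow> real \<Rightarrow> cmat" where
  "evol E0 E1 t = mat_of_rows_list 2
     [[exp (- \<i> * of_real (E0 * t)), 0], [0, exp (- \<i> * of_real (E1 * t))]]"

definition gibbs_weight :: "real \<Rightarrow> real \<Rightarrow> real \<Rightarrow> real" where
  "gibbs_weight \<beta> E0 E1 = exp (- \<beta> * E0) / (exp (- \<beta> * E0) + exp (- \<beta> * E1))"

definition gibbs :: "real \<Rightarrow> real \<Rightarrow> real \<Rightarrow> cmat" where
  "gibbs \<beta> E0 E1 = mat_of_rows_list 2
     [[of_real (gibbs_weight \<beta> E0 E1), 0], [0, of_real (1 - gibbs_weight \<beta> E0 E1)]]"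

definition covariant :: "real \<Rightarrow> real \<Rightarrow> (cmat \<Rightarrow> cmat) \<Rightarrow> bool" where
  "covariant E0 E1 E \<longleftrightarrow> (\<forall>t::real. \<forall>X \<in> carrier_mat 2 2.
      E (evol E0 E1 t * X * madj (evol E0 E1 t)) = evol E0 E1 t * E X * madj (evol E0 E1 t))"

definition GPC :: "real \<Rightarrow> real \<Rightarrow> real \<Rightarrow> (cmat \<Rightarrow> cmat) set" where
  "GPC \<beta> E0 E1 = {E. quantum_channel E \<and> E (gibbs \<beta> E0 E1) = gibbs \<beta> E0 E1 \<and> covariant E0 E1 E}"

definition GPC_convertible :: "real \<Rightarrow> real \<Rightarrow> real \<Rightarrow> cmat \<Rightarrow> cmat \<Rightarrow> bool" where
  "GPC_convertible \<beta> E0 E1 \<rho> \<sigma> \<longleftrightarrow> (\<exists>E \<in> GPC \<beta> E0 E1. E \<rho> = \<sigma>)"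

definition rel_majorizes :: "nat \<Rightarrow> real vec \<Rightarrow> real vec \<Rightarrow> real vec \<Rightarrow> real vec \<Rightarrow> bool" where
  "rel_majorizes n r g s g' \<longleftrightarrow> (\<exists>E \<in> carrier_mat n n.
      (\<forall>i<n. \<forall>j<n. E $$ (i, j) \<ge> 0) \<and> (\<forall>j<n. (\<Sum>i<n. E $$ (i, j)) = 1) \<and>
      E *\<^sub>v r = s \<and> E *\<^sub>v g = g')"

definition qubit :: "real \<Rightarrow> complex \<Rightarrow> cmat" where
  "qubit r a = mat_of_rows_list 2 [[of_real r, a], [cnj a, of_real (1 - r)]]"

definition diagv :: "real \<Rightarrow> real vec" where
  "diagv r = vec_of_list [r, 1 - r]"

end

theory Submission
  imports Defs
begin

(* Time-translation covariance with a nondegenerate gap E0 ~= E1 forces a qubit channel to map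
   populations to populations by a column-stochastic matrix [[x, y], [1 - x, 1 - y]] and to multiply
   the coherence by a single complex number c. Positivity of the Choi matrix gives
   |c|^2 <= x (1 - y), and conversely every such map has an explicit Kraus decomposition; so the GPC
   qubit channels are exactly these maps with (g, 1 - g) as fixed point. Converting rho into sigma
   thus asks for a Gibbs-fixing stochastic matrix sending (r, 1 - r) to (s, 1 - s), i.e. relative
   majorization, with x (1 - y) >= |b|^2 / |a|^2. For r ~= g the two linear constraints determine
   x and y, and x (1 - y) is the quotient of determinants; for r = g only s = g is reachable, and
   x = 1, y = 0 gives the largest factor 1. *)

declare One_nat_def [simp del]

lemma less_2_cases: "(i::nat) < 2 \<Longrightarrow> i = 0 \<or> i = 1"
  by auto

lemma sum_lessThan_2: "(\<Sum>i<(2::nat). f i) = f 0 + (f 1 :: 'a::comm_monoid_add)"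
  by (simp add: numeral_2_eq_2 One_nat_def)

lemma sum_lessThan_4: "(\<Sum>i<(4::nat). f i) = f 0 + f 1 + f 2 + (f 3 :: 'a::comm_monoid_add)"
  by (simp add: eval_nat_numeral add.assoc One_nat_def)

lemma sum_lessThan_double:
  "(\<Sum>i<2 * (k::nat). f i) = (\<Sum>p<k. \<Sum>\<alpha><2. f (2 * p + \<alpha>) :: 'a::comm_monoid_add)"
proof (induction k)
  case (Suc k)
  have "2 * Suc k = Suc (Suc (2 * k))" by simp
  then show ?case using Suc by (simp add: sum_lessThan_2 add.assoc One_nat_def)
qed simp

lemma sum_two_point:
  assumes "i < (n::nat)" "j < n" "i \<noteq> j" "\<And>k. h k 0 = 0"
  shows "(\<Sum>k<n. h k (if k = i then x else if k = j then y else 0)) = h i x + h j y"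
proof -
  have "(\<Sum>k<n. h k (if k = i then x else if k = j then y else 0))
      = (\<Sum>k\<in>{i, j}. h k (if k = i then x else if k = j then y else 0))"
    by (intro sum.mono_neutral_right finite_lessThan) (use assms in auto)
  then show ?thesis using assms(3) by simp
qed

lemma mat2_eqI:
  assumes "A \<in> carrier_mat 2 2" "B \<in> carrier_mat 2 2"
    and "A $$ (0,0) = B $$ (0,0)" "A $$ (0,1) = B $$ (0,1)"
    and "A $$ (1,0) = B $$ (1,0)" "A $$ (1,1) = B $$ (1,1)"
  shows "A = B"
  using assms by (intro eq_matI) (auto dest!: less_2_cases)

lemma mat_of_rows_list_2 [simp]:
  "mat_of_rows_list 2 [[a, b], [c, d]] \<in> carrier_mat 2 2"
  "mat_of_rows_list 2 [[a, b], [c, d]] $$ (0,0) = a"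
  "mat_of_rows_list 2 [[a, b], [c, d]] $$ (0,1) = b"
  "mat_of_rows_list 2 [[a, b], [c, d]] $$ (1,0) = c"
  "mat_of_rows_list 2 [[a, b], [c, d]] $$ (1,1) = d"
  unfolding mat_of_rows_list_def carrier_mat_def by simp_all

lemma det_mat_of_rows_list_2:
  "det (mat_of_rows_list 2 [[a, b], [c, d]]) = a * d - b * (c :: 'a::comm_ring_1)"
proof -
  have det1: "det (mat (Suc 0) (Suc 0) f) = f (0, 0)" for f :: "nat \<times> nat \<Rightarrow> 'a"
    by (subst det_upper_triangular[where n = 1]) (auto simp: upper_triangular_def diag_mat_def)
  show ?thesis
    unfolding mat_of_rows_list_def
    by (subst laplace_expansion_column[where j = 0 and n = 2])
      (auto simp: cofactor_def mat_delete_def det1 numeral_2_eq_2)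
qed

lemma add_mat_2_entry:
  "A \<in> carrier_mat 2 2 \<Longrightarrow> B \<in> carrier_mat 2 2 \<Longrightarrow> i < 2 \<Longrightarrow> j < 2 \<Longrightarrow>
    (A + B) $$ (i, j) = A $$ (i, j) + B $$ (i, j)"
  by simp

lemma mtrace_2: "X \<in> carrier_mat 2 2 \<Longrightarrow> mtrace X = X $$ (0,0) + X $$ (1,1)"
  unfolding mtrace_def by (simp add: sum_lessThan_2)

lemma qubit_simps [simp]:
  "qubit r a \<in> carrier_mat 2 2"
  "qubit r a $$ (0,0) = of_real r" "qubit r a $$ (0,1) = a"
  "qubit r a $$ (1,0) = cnj a" "qubit r a $$ (1,1) = of_real (1 - r)"
  by (simp_all add: qubit_def)

lemma qubit_eq_iff: "qubit r a = qubit s b \<longleftrightarrow> r = s \<and> a = b"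
  by (metis of_real_eq_iff qubit_simps(2,3))

lemma gibbs_simps [simp]:
  "gibbs \<beta> E0 E1 \<in> carrier_mat 2 2"
  "gibbs \<beta> E0 E1 $$ (0,0) = of_real (gibbs_weight \<beta> E0 E1)"
  "gibbs \<beta> E0 E1 $$ (0,1) = 0" "gibbs \<beta> E0 E1 $$ (1,0) = 0"
  "gibbs \<beta> E0 E1 $$ (1,1) = of_real (1 - gibbs_weight \<beta> E0 E1)"
  by (simp_all add: gibbs_def)

definition mat_unit :: "nat \<Rightarrow> nat \<Rightarrow> cmat" where
  "mat_unit i j = mat 2 2 (\<lambda>(k, l). if k = i \<and> l = j then 1 else 0)"

lemma mat_unit_carrier [simp]: "mat_unit i j \<in> carrier_mat 2 2"
  by (simp add: mat_unit_def)

lemma linear_map2_carrier: "linear_map2 E \<Longrightarrow> X \<in> carrier_mat 2 2 \<Longrightarrow> E X \<in> carrier_mat 2 2"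
  by (simp add: linear_map2_def)

lemma linear_map2_add:
  assumes "linear_map2 E" "X \<in> carrier_mat 2 2" "Y \<in> carrier_mat 2 2"
  shows "E (X + Y) = E X + E Y"
proof -
  have one: "1 \<cdot>\<^sub>m Z = Z" for Z :: cmat
    by (rule eq_matI) auto
  show ?thesis
    using assms one unfolding linear_map2_def by metis
qed

lemma linear_map2_smult:
  assumes E: "linear_map2 E" and X: "X \<in> carrier_mat 2 2"
  shows "E (c \<cdot>\<^sub>m X) = c \<cdot>\<^sub>m E X"
proof -
  have Z: "0\<^sub>m 2 2 \<in> carrier_mat 2 2" by simp
  have "E (c \<cdot>\<^sub>m X + 0 \<cdot>\<^sub>m 0\<^sub>m 2 2) = c \<cdot>\<^sub>m E X + 0 \<cdot>\<^sub>m E (0\<^sub>m 2 2)"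
    using E X Z unfolding linear_map2_def by blast
  moreover have "c \<cdot>\<^sub>m X + 0 \<cdot>\<^sub>m 0\<^sub>m 2 2 = c \<cdot>\<^sub>m X"
    using X by (intro eq_matI) auto
  moreover have "c \<cdot>\<^sub>m E X + 0 \<cdot>\<^sub>m E (0\<^sub>m 2 2) = c \<cdot>\<^sub>m E X"
    using linear_map2_carrier[OF E Z] linear_map2_carrier[OF E X] by (intro eq_matI) auto
  ultimately show ?thesis by simp
qed

lemma linear_map2_entry:
  assumes E: "linear_map2 E" and X: "X \<in> carrier_mat 2 2" and "k < 2" "l < 2"
  shows "E X $$ (k,l) =
    X $$ (0,0) * E (mat_unit 0 0) $$ (k,l) + X $$ (0,1) * E (mat_unit 0 1) $$ (k,l) +
    X $$ (1,0) * E (mat_unit 1 0) $$ (k,l) + X $$ (1,1) * E (mat_unit 1 1) $$ (k,l)"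
proof -
  have "X = X $$ (0,0) \<cdot>\<^sub>m mat_unit 0 0 + X $$ (0,1) \<cdot>\<^sub>m mat_unit 0 1 +
      X $$ (1,0) \<cdot>\<^sub>m mat_unit 1 0 + X $$ (1,1) \<cdot>\<^sub>m mat_unit 1 1"
    using X by (intro mat2_eqI) (auto simp: mat_unit_def)
  then have "E X = E (X $$ (0,0) \<cdot>\<^sub>m mat_unit 0 0 + X $$ (0,1) \<cdot>\<^sub>m mat_unit 0 1 +
      X $$ (1,0) \<cdot>\<^sub>m mat_unit 1 0 + X $$ (1,1) \<cdot>\<^sub>m mat_unit 1 1)"
    by (rule arg_cong)
  also have "\<dots> = X $$ (0,0) \<cdot>\<^sub>m E (mat_unit 0 0) + X $$ (0,1) \<cdot>\<^sub>m E (mat_unit 0 1) +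
      X $$ (1,0) \<cdot>\<^sub>m E (mat_unit 1 0) + X $$ (1,1) \<cdot>\<^sub>m E (mat_unit 1 1)"
    using E by (simp add: linear_map2_add linear_map2_smult)
  finally have "E X = X $$ (0,0) \<cdot>\<^sub>m E (mat_unit 0 0) + X $$ (0,1) \<cdot>\<^sub>m E (mat_unit 0 1) +
      X $$ (1,0) \<cdot>\<^sub>m E (mat_unit 1 0) + X $$ (1,1) \<cdot>\<^sub>m E (mat_unit 1 1)" .
  moreover have "dim_row (E (mat_unit i j)) = 2" "dim_col (E (mat_unit i j)) = 2" for i j
    using linear_map2_carrier[OF E mat_unit_carrier] by auto
  ultimately show ?thesis
    using assms(3,4) by simp
qed

definition energy :: "real \<Rightarrow> real \<Rightarrow> nat \<Rightarrow> real" where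
  "energy E0 E1 i = (if i = 0 then E0 else E1)"

lemma evol_conj:
  assumes "X \<in> carrier_mat 2 2"
  shows "evol E0 E1 t * X * madj (evol E0 E1 t) = mat 2 2 (\<lambda>(k, l).
    exp (- \<i> * of_real ((energy E0 E1 k - energy E0 E1 l) * t)) * X $$ (k, l))"
proof -
  define u where "u k = exp (- \<i> * of_real (energy E0 E1 k * t))" for k
  have conj: "evol E0 E1 t * X * madj (evol E0 E1 t) = mat 2 2 (\<lambda>(k, l). u k * X $$ (k, l) * cnj (u l))"
    using assms by (intro mat2_eqI) (auto simp: evol_def madj_def mat_of_rows_list_def
        scalar_prod_def u_def energy_def numeral_2_eq_2 One_nat_def)
  have phase: "u k * z * cnj (u l) = exp (- \<i> * of_real ((energy E0 E1 k - energy E0 E1 l) * t)) * z"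
    for k l z
    by (simp add: u_def exp_cnj exp_add[symmetric] algebra_simps)
  show ?thesis
    by (simp only: conj phase)
qed

lemma covariant_mat_unit_entry_eq_0:
  assumes cov: "covariant E0 E1 E" and E: "linear_map2 E"
    and ij: "i < 2" "j < 2" and kl: "k < 2" "l < 2"
    and gap: "energy E0 E1 i - energy E0 E1 j \<noteq> energy E0 E1 k - energy E0 E1 l"
  shows "E (mat_unit i j) $$ (k, l) = 0"
proof -
  define d d' where "d = energy E0 E1 i - energy E0 E1 j" and "d' = energy E0 E1 k - energy E0 E1 l"
  \<comment> \<open>at this time the phases \<open>exp (- \<i> d t)\<close> picked up by the input and
    \<open>exp (- \<i> d' t)\<close> picked up by the output entry have opposite signs\<close>
  define t where "t = pi / (d - d')"
  define w where "w \<delta> = exp (- \<i> * of_real (\<delta> * t))" for \<delta>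
  let ?U = "evol E0 E1 t"
  have EU: "E (mat_unit i j) \<in> carrier_mat 2 2"
    using linear_map2_carrier[OF E mat_unit_carrier] .
  have "?U * mat_unit i j * madj ?U = w d \<cdot>\<^sub>m mat_unit i j"
    by (subst evol_conj) (auto simp: mat_unit_def w_def d_def intro!: eq_matI)
  then have "w d \<cdot>\<^sub>m E (mat_unit i j) = ?U * E (mat_unit i j) * madj ?U"
    using cov linear_map2_smult[OF E mat_unit_carrier] unfolding covariant_def
    by (metis mat_unit_carrier)
  then have "(w d \<cdot>\<^sub>m E (mat_unit i j)) $$ (k, l) = (?U * E (mat_unit i j) * madj ?U) $$ (k, l)"
    by (rule arg_cong)
  then have "w d * E (mat_unit i j) $$ (k, l) = w d' * E (mat_unit i j) $$ (k, l)"
    using EU kl by (simp add: evol_conj w_def d'_def)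
  moreover have "w d = - w d'"
  proof -
    have dt: "d * t = d' * t + pi"
      using gap by (simp add: t_def d_def d'_def field_simps)
    have "w d = exp (- \<i> * of_real (d' * t) + - \<i> * of_real pi)"
      unfolding w_def dt by (simp only: of_real_add distrib_left)
    also have "\<dots> = - w d'"
      unfolding w_def exp_add by (simp add: exp_minus)
    finally show ?thesis .
  qed
  moreover have "w d' \<noteq> 0"
    by (simp add: w_def)
  ultimately show ?thesis
    by simp
qed

lemma covariant_linear_map2_eq:
  assumes E: "linear_map2 E" and cov: "covariant E0 E1 E" and "E0 \<noteq> E1"
    and X: "X \<in> carrier_mat 2 2"
  shows "E X = mat_of_rows_list 2
    [[X $$ (0,0) * E (mat_unit 0 0) $$ (0,0) + X $$ (1,1) * E (mat_unit 1 1) $$ (0,0),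
      X $$ (0,1) * E (mat_unit 0 1) $$ (0,1)],
     [X $$ (1,0) * E (mat_unit 1 0) $$ (1,0),
      X $$ (0,0) * E (mat_unit 0 0) $$ (1,1) + X $$ (1,1) * E (mat_unit 1 1) $$ (1,1)]]"
proof -
  have vanish: "E (mat_unit i j) $$ (k, l) = 0"
    if "i < 2" "j < 2" "k < 2" "l < 2"
      "energy E0 E1 i - energy E0 E1 j \<noteq> energy E0 E1 k - energy E0 E1 l" for i j k l
    using covariant_mat_unit_entry_eq_0[OF cov E that] .
  have "E (mat_unit 0 1) $$ (0,0) = 0" "E (mat_unit 1 0) $$ (0,0) = 0"
    "E (mat_unit 0 0) $$ (0,1) = 0" "E (mat_unit 1 0) $$ (0,1) = 0" "E (mat_unit 1 1) $$ (0,1) = 0"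
    "E (mat_unit 0 0) $$ (1,0) = 0" "E (mat_unit 0 1) $$ (1,0) = 0" "E (mat_unit 1 1) $$ (1,0) = 0"
    "E (mat_unit 0 1) $$ (1,1) = 0" "E (mat_unit 1 0) $$ (1,1) = 0"
    using assms(3) by (auto intro!: vanish simp: energy_def)
  then show ?thesis
    using linear_map2_entry[OF E X] linear_map2_carrier[OF E X] by (intro mat2_eqI) simp_all
qed

definition qform :: "nat \<Rightarrow> cmat \<Rightarrow> complex vec \<Rightarrow> complex" where
  "qform n M v = (\<Sum>i<n. \<Sum>j<n. cnj (v $ i) * M $$ (i, j) * v $ j)"

lemma psd_iff_qform:
  "psd n M \<longleftrightarrow> M \<in> carrier_mat n n \<and>
    (\<forall>v \<in> carrier_vec n. Im (qform n M v) = 0 \<and> 0 \<le> Re (qform n M v))"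
  by (simp add: psd_def qform_def Let_def)

lemma qform_two_point:
  assumes "i < n" "j < n" "i \<noteq> j"
  shows "qform n M (vec n (\<lambda>k. if k = i then x else if k = j then y else 0)) =
    cnj x * M $$ (i,i) * x + cnj x * M $$ (i,j) * y + cnj y * M $$ (j,i) * x + cnj y * M $$ (j,j) * y"
proof -
  let ?v = "\<lambda>k. if k = i then x else if k = j then y else 0"
  have "qform n M (vec n ?v) = (\<Sum>k<n. \<Sum>l<n. cnj (?v k) * M $$ (k, l) * ?v l)"
    unfolding qform_def by (intro sum.cong) auto
  also have "\<dots> = (\<Sum>k<n. cnj (?v k) * (M $$ (k, i) * x + M $$ (k, j) * y))"
    by (intro sum.cong refl, subst sum_two_point[OF assms]) (auto simp: algebra_simps)
  also have "\<dots> = cnj x * (M $$ (i, i) * x + M $$ (i, j) * y) + cnj y * (M $$ (j, i) * x + M $$ (j, j) * y)"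
    by (subst sum_two_point[OF assms, where h = "\<lambda>k z. cnj z * (M $$ (k, i) * x + M $$ (k, j) * y)"])
      simp_all
  finally show ?thesis
    by (simp add: algebra_simps)
qed

lemma quadratic_nonneg_imp_le:
  fixes a b K :: real
  assumes "\<And>t. 0 \<le> a * K - 2 * t * K + b * t\<^sup>2" "0 \<le> K" "0 \<le> a" "0 \<le> b"
  shows "K \<le> a * b"
proof (cases "b = 0")
  case True
  have "0 \<le> a * K - 2 * ((a * K + 1) / (2 * K)) * K" if "K > 0"
    using assms(1)[of "(a * K + 1) / (2 * K)"] True by simp
  also have "\<dots> = -1" if "K > 0"
    using that by (simp add: field_simps)
  finally show ?thesis
    using assms(2) True by force
next
  case False
  then have b: "b > 0" using assms(4) by simp
  have "0 \<le> a * K - 2 * (K / b) * K + b * (K / b)\<^sup>2"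
    by (rule assms(1))
  also have "\<dots> = (a * b - K) * K / b"
    using b by (simp add: field_simps power2_eq_square)
  finally have "0 \<le> (a * b - K) * K"
    using b by (simp add: zero_le_divide_iff)
  then show ?thesis
    using assms(2-4) by (cases "K = 0") (simp_all add: zero_le_mult_iff)
qed

lemma nonneg_hermitian_form_2:
  fixes A B C D :: complex
  assumes H: "\<And>x y. Im (cnj x * A * x + cnj x * C * y + cnj y * D * x + cnj y * B * y) = 0 \<and>
    0 \<le> Re (cnj x * A * x + cnj x * C * y + cnj y * D * x + cnj y * B * y)"
  shows "Im A = 0" "0 \<le> Re A" "Im B = 0" "0 \<le> Re B" "D = cnj C" "cmod C ^ 2 \<le> Re A * Re B"
proof -
  show A: "Im A = 0" "0 \<le> Re A" using H[of 1 0] by auto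
  show B: "Im B = 0" "0 \<le> Re B" using H[of 0 1] by auto
  have "Im C + Im D = 0" using H[of 1 1] A B by simp
  moreover have "Re C - Re D = 0" using H[of 1 \<i>] A B by simp
  ultimately show D: "D = cnj C" by (intro complex_eqI) auto
  have "0 \<le> Re A * (cmod C)\<^sup>2 - 2 * t * (cmod C)\<^sup>2 + Re B * t\<^sup>2" for t :: real
  proof -
    have "Re (cnj (- C) * A * (- C) + cnj (- C) * C * of_real t + cnj (of_real t) * D * (- C) +
        cnj (of_real t) * B * of_real t) = Re A * (cmod C)\<^sup>2 - 2 * t * (cmod C)\<^sup>2 + Re B * t\<^sup>2"
      using A B
      by (simp add: D cmod_power2 algebra_simps power2_eq_square cmod_def real_sqrt_mult_self)
    then show ?thesis using H[of "- C" "of_real t"] by simp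
  qed
  then show "cmod C ^ 2 \<le> Re A * Re B"
    by (rule quadratic_nonneg_imp_le) (use A B in auto)
qed

lemma psd_principal_2x2:
  assumes "psd n M" "i < n" "j < n" "i \<noteq> j"
  shows "Im (M $$ (i,i)) = 0" "0 \<le> Re (M $$ (i,i))" "Im (M $$ (j,j)) = 0" "0 \<le> Re (M $$ (j,j))"
    and "M $$ (j,i) = cnj (M $$ (i,j))"
    and "cmod (M $$ (i,j)) ^ 2 \<le> Re (M $$ (i,i)) * Re (M $$ (j,j))"
proof -
  have "Im (cnj x * M $$ (i,i) * x + cnj x * M $$ (i,j) * y + cnj y * M $$ (j,i) * x +
      cnj y * M $$ (j,j) * y) = 0 \<and>
    0 \<le> Re (cnj x * M $$ (i,i) * x + cnj x * M $$ (i,j) * y + cnj y * M $$ (j,i) * x +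
      cnj y * M $$ (j,j) * y)" for x y
  proof -
    let ?v = "vec n (\<lambda>k. if k = i then x else if k = j then y else 0)"
    have "Im (qform n M ?v) = 0 \<and> 0 \<le> Re (qform n M ?v)"
      using assms(1) unfolding psd_iff_qform by simp
    then show ?thesis
      unfolding qform_two_point[OF assms(2-4)] .
  qed
  note form = nonneg_hermitian_form_2[OF this]
  show "Im (M $$ (i,i)) = 0" "0 \<le> Re (M $$ (i,i))" "Im (M $$ (j,j)) = 0" "0 \<le> Re (M $$ (j,j))"
    "M $$ (j,i) = cnj (M $$ (i,j))" "cmod (M $$ (i,j)) ^ 2 \<le> Re (M $$ (i,i)) * Re (M $$ (j,j))"
    by (fact form)+
qed

lemma qform_blocks:
  "qform (2 * k) M v = (\<Sum>p<k. \<Sum>q<k. \<Sum>\<alpha><2. \<Sum>\<beta><2.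
    cnj (v $ (2 * p + \<alpha>)) * M $$ (2 * p + \<alpha>, 2 * q + \<beta>) * v $ (2 * q + \<beta>))"
  unfolding qform_def sum_lessThan_double by (intro sum.cong refl sum.swap)

lemma psd_add:
  assumes "psd n A" "psd n B"
  shows "psd n (A + B)"
proof -
  have "qform n (A + B) v = qform n A v + qform n B v" for v
    using assms unfolding psd_iff_qform qform_def
    by (auto simp: sum.distrib[symmetric] algebra_simps intro!: sum.cong)
  then show ?thesis
    using assms unfolding psd_iff_qform by auto
qed

(* The unnormalized projector onto |00> + |11>, in the index convention 2 * ancilla + system of
   ext_map; its image under E (x) id is the Choi matrix of E. *)
definition max_entangled :: cmat where
  "max_entangled = mat 4 4 (\<lambda>(i, j). if i \<in> {0, 3} \<and> j \<in> {0, 3} then 1 else 0)"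

lemma psd_max_entangled: "psd 4 max_entangled"
  unfolding psd_iff_qform
proof (intro conjI ballI)
  show "max_entangled \<in> carrier_mat 4 4"
    by (simp add: max_entangled_def)
  fix v :: "complex vec"
  have "qform 4 max_entangled v = (v $ 0 + v $ 3) * cnj (v $ 0 + v $ 3)"
    by (simp add: qform_def sum_lessThan_4 max_entangled_def algebra_simps)
  also have "\<dots> = of_real ((cmod (v $ 0 + v $ 3))\<^sup>2)"
    by (rule complex_norm_square[symmetric])
  finally show "Im (qform 4 max_entangled v) = 0" "0 \<le> Re (qform 4 max_entangled v)"
    by simp_all
qed

lemma ext_map_max_entangled:
  assumes "i < 4" "j < 4"
  shows "ext_map E 2 max_entangled $$ (i, j) = E (mat_unit (i div 2) (j div 2)) $$ (i mod 2, j mod 2)"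
proof -
  have "blk max_entangled p q = mat_unit p q" if "p < 2" "q < 2" for p q
    using that by (intro mat2_eqI) (auto simp: blk_def max_entangled_def mat_unit_def dest!: less_2_cases)
  then show ?thesis
    using assms by (simp add: ext_map_def)
qed

lemma completely_positive_cong:
  assumes "\<And>X. X \<in> carrier_mat 2 2 \<Longrightarrow> E X = F X" "completely_positive F"
  shows "completely_positive E"
proof -
  have "ext_map E k M = ext_map F k M" for k M
    using assms(1) by (simp add: ext_map_def blk_def)
  then show ?thesis
    using assms(2) unfolding completely_positive_def by simp
qed

lemma completely_positive_add:
  assumes "completely_positive E" "completely_positive F"
    and F: "\<And>X. X \<in> carrier_mat 2 2 \<Longrightarrow> F X \<in> carrier_mat 2 2"
  shows "completely_positive (\<lambda>X. E X + F X)"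
proof -
  have "ext_map (\<lambda>X. E X + F X) k M = ext_map E k M + ext_map F k M" for k M
  proof (rule eq_matI)
    fix i j assume "i < dim_row (ext_map E k M + ext_map F k M)" "j < dim_col (ext_map E k M + ext_map F k M)"
    moreover have "dim_row (F (blk M p q)) = 2" "dim_col (F (blk M p q)) = 2" for p q
      using F[of "blk M p q"] by (auto simp: blk_def)
    ultimately show "ext_map (\<lambda>X. E X + F X) k M $$ (i, j) = (ext_map E k M + ext_map F k M) $$ (i, j)"
      by (simp add: ext_map_def)
  qed (simp_all add: ext_map_def)
  then show ?thesis
    using assms(1,2) psd_add unfolding completely_positive_def by metis
qed

lemma mult_madj_carrier [simp]:
  "K \<in> carrier_mat 2 2 \<Longrightarrow> X \<in> carrier_mat 2 2 \<Longrightarrow> K * X * madj K \<in> carrier_mat 2 2"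
  by (auto simp: madj_def intro!: mult_carrier_mat)

lemma mult_madj_entry:
  assumes "K \<in> carrier_mat 2 2" "X \<in> carrier_mat 2 2" "\<alpha> < 2" "\<beta> < 2"
  shows "(K * X * madj K) $$ (\<alpha>, \<beta>) =
    (\<Sum>\<gamma><2. \<Sum>\<delta><2. K $$ (\<alpha>, \<gamma>) * X $$ (\<gamma>, \<delta>) * cnj (K $$ (\<beta>, \<delta>)))"
  using assms
  by (simp add: madj_def scalar_prod_def sum_lessThan_2 atLeast0LessThan algebra_simps)

lemma completely_positive_conj:
  assumes K: "K \<in> carrier_mat 2 2"
  shows "completely_positive (\<lambda>X. K * X * madj K)"
  unfolding completely_positive_def
proof (intro allI impI)
  fix k M assume M: "psd (2 * k) M"
  let ?N = "ext_map (\<lambda>X. K * X * madj K) k M"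
  have "Im (qform (2 * k) ?N v) = 0 \<and> 0 \<le> Re (qform (2 * k) ?N v)" if "v \<in> carrier_vec (2 * k)" for v
  proof -
    \<comment> \<open>\<open>v\<close> transformed blockwise by \<open>madj K\<close>, so that the form of
      \<open>(id \<otimes> K) M (id \<otimes> K)\<^sup>*\<close> at \<open>v\<close> is the form of \<open>M\<close> at \<open>w\<close>\<close>
    define w where
      "w = vec (2 * k) (\<lambda>i. \<Sum>\<alpha><2. cnj (K $$ (\<alpha>, i mod 2)) * v $ (2 * (i div 2) + \<alpha>))"
    have block:
      "(\<Sum>\<alpha><2. \<Sum>\<beta><2. cnj (v $ (2 * p + \<alpha>)) * ?N $$ (2 * p + \<alpha>, 2 * q + \<beta>) * v $ (2 * q + \<beta>)) =
       (\<Sum>\<alpha><2. \<Sum>\<beta><2. cnj (w $ (2 * p + \<alpha>)) * M $$ (2 * p + \<alpha>, 2 * q + \<beta>) * w $ (2 * q + \<beta>))"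
      if "p < k" "q < k" for p q
    proof -
      from that have "2 * p < 2 * k" "2 * p + 1 < 2 * k" "2 * q < 2 * k" "2 * q + 1 < 2 * k"
        by auto
      then show ?thesis
        using K by (simp add: sum_lessThan_2 ext_map_def mult_madj_entry w_def blk_def algebra_simps)
    qed
    have "qform (2 * k) ?N v = qform (2 * k) M w"
      unfolding qform_blocks by (rule sum.cong[OF refl], rule sum.cong[OF refl], rule block) auto
    moreover have "w \<in> carrier_vec (2 * k)"
      by (simp add: w_def)
    ultimately show ?thesis
      using M unfolding psd_iff_qform by simp
  qed
  then show "psd (2 * k) ?N"
    unfolding psd_iff_qform by (simp add: ext_map_def)
qed

(* gibbs_stochastic g x y: the column-stochastic matrix [[x, y], [1 - x, 1 - y]] fixes the Gibbs
   distribution (g, 1 - g). *)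
definition gibbs_stochastic :: "real \<Rightarrow> real \<Rightarrow> real \<Rightarrow> bool" where
  "gibbs_stochastic g x y \<longleftrightarrow> 0 \<le> x \<and> x \<le> 1 \<and> 0 \<le> y \<and> y \<le> 1 \<and> g * x + (1 - g) * y = g"

definition covariant_qubit_map :: "real \<Rightarrow> real \<Rightarrow> complex \<Rightarrow> cmat \<Rightarrow> cmat" where
  "covariant_qubit_map x y c X = mat_of_rows_list 2
    [[of_real x * X $$ (0,0) + of_real y * X $$ (1,1), c * X $$ (0,1)],
     [cnj c * X $$ (1,0), of_real (1 - x) * X $$ (0,0) + of_real (1 - y) * X $$ (1,1)]]"

lemma covariant_qubit_map_simps [simp]:
  "covariant_qubit_map x y c X \<in> carrier_mat 2 2"
  "dim_row (covariant_qubit_map x y c X) = 2" "dim_col (covariant_qubit_map x y c X) = 2"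
  "covariant_qubit_map x y c X $$ (0,0) = of_real x * X $$ (0,0) + of_real y * X $$ (1,1)"
  "covariant_qubit_map x y c X $$ (0,1) = c * X $$ (0,1)"
  "covariant_qubit_map x y c X $$ (1,0) = cnj c * X $$ (1,0)"
  "covariant_qubit_map x y c X $$ (1,1) = of_real (1 - x) * X $$ (0,0) + of_real (1 - y) * X $$ (1,1)"
proof -
  show carrier: "covariant_qubit_map x y c X \<in> carrier_mat 2 2"
    by (simp add: covariant_qubit_map_def)
  then show "dim_row (covariant_qubit_map x y c X) = 2" "dim_col (covariant_qubit_map x y c X) = 2"
    by auto
qed (simp_all add: covariant_qubit_map_def)

lemma covariant_qubit_map_qubit:
  "covariant_qubit_map x y c (qubit r a) = qubit (r * x + (1 - r) * y) (c * a)"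
  by (intro mat2_eqI) (simp_all add: algebra_simps)

lemma covariant_qubit_map_completely_positive:
  assumes "0 \<le> x" "x \<le> 1" "0 \<le> y" "y \<le> 1" and c: "cmod c ^ 2 \<le> x * (1 - y)"
  shows "completely_positive (covariant_qubit_map x y c)"
proof -
  define d where "d = cnj c / of_real (sqrt x)"
  have c_eq: "of_real (sqrt x) * cnj d = c"
  proof (cases "x = 0")
    case True
    then show ?thesis using c by (simp add: d_def)
  next
    case False
    then show ?thesis using assms(1) by (simp add: d_def)
  qed
  have d_bound: "cmod d ^ 2 \<le> 1 - y"
  proof (cases "x = 0")
    case False
    then have "cmod d ^ 2 = cmod c ^ 2 / x"
      using assms(1) by (simp add: d_def norm_divide power_divide)
    also have "\<dots> \<le> 1 - y"
      using c False assms(1) by (simp add: divide_le_eq mult.commute)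
    finally show ?thesis .
  qed (use assms(4) in \<open>simp add: d_def\<close>)
  have sq: "complex_of_real (sqrt z) * complex_of_real (sqrt z) = complex_of_real z" if "0 \<le> z" for z
    using that by (simp flip: of_real_mult)
  have sq': "complex_of_real (sqrt z) * u * complex_of_real (sqrt z) = complex_of_real z * u" if "0 \<le> z" for z u
    using sq[OF that] by (simp add: ac_simps)
  define w where "w = sqrt (1 - y - cmod d ^ 2)"
  have dw: "d * cnj d + of_real w * of_real w = of_real (1 - y)"
    using d_bound by (simp add: w_def sq flip: complex_norm_square)
  have dw': "d * u * cnj d + of_real w * u * of_real w = of_real (1 - y) * u" for u
    unfolding dw[symmetric] by (simp add: algebra_simps)
  have c_eq': "d * of_real (sqrt x) = cnj c"
    using arg_cong[OF c_eq, of cnj] by (simp add: mult.commute)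
  \<comment> \<open>Kraus operators: \<open>K1\<close> carries the coherence, \<open>K2\<close> the rest of the weight
    \<open>1 - y\<close> on \<open>|1\<rangle>\<close>, \<open>K3\<close> and \<open>K4\<close> the jumps \<open>|0\<rangle> \<mapsto> |1\<rangle>\<close> and \<open>|1\<rangle> \<mapsto> |0\<rangle>\<close>\<close>
  define K1 K2 K3 K4 :: cmat where
    "K1 = mat_of_rows_list 2 [[of_real (sqrt x), 0], [0, d]]"
    and "K2 = mat_of_rows_list 2 [[0, 0], [0, of_real w]]"
    and "K3 = mat_of_rows_list 2 [[0, 0], [of_real (sqrt (1 - x)), 0]]"
    and "K4 = mat_of_rows_list 2 [[0, of_real (sqrt y)], [0, 0]]"
  have K: "K1 \<in> carrier_mat 2 2" "K2 \<in> carrier_mat 2 2" "K3 \<in> carrier_mat 2 2" "K4 \<in> carrier_mat 2 2"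
    by (simp_all add: K1_def K2_def K3_def K4_def)
  have "covariant_qubit_map x y c X =
      K1 * X * madj K1 + K2 * X * madj K2 + K3 * X * madj K3 + K4 * X * madj K4"
    (is "?L = ?R") if X: "X \<in> carrier_mat 2 2" for X
  proof (rule mat2_eqI)
    note entries = mult_madj_entry sum_lessThan_2 add_mat_2_entry K1_def K2_def K3_def K4_def
    show "?L $$ (0,0) = ?R $$ (0,0)"
      using K X assms by (simp add: entries sq')
    show "?L $$ (0,1) = ?R $$ (0,1)"
      using K X assms by (simp add: entries c_eq)
    show "?L $$ (1,0) = ?R $$ (1,0)"
      using K X assms by (simp add: entries c_eq' ac_simps)
    show "?L $$ (1,1) = ?R $$ (1,1)"
      using K X assms by (simp add: entries sq' dw' flip: add.assoc)
  qed (use K X in auto)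
  moreover have "completely_positive (\<lambda>X.
      K1 * X * madj K1 + K2 * X * madj K2 + K3 * X * madj K3 + K4 * X * madj K4)"
    using K by (intro completely_positive_add completely_positive_conj) auto
  ultimately show ?thesis
    by (rule completely_positive_cong)
qed

lemma covariant_qubit_map_in_GPC:
  assumes g: "gibbs_stochastic (gibbs_weight \<beta> E0 E1) x y" and c: "cmod c ^ 2 \<le> x * (1 - y)"
  shows "covariant_qubit_map x y c \<in> GPC \<beta> E0 E1"
proof -
  let ?E = "covariant_qubit_map x y c"
  have "linear_map2 ?E"
    unfolding linear_map2_def
    by (auto intro!: mat2_eqI simp: algebra_simps)
  moreover have "trace_preserving ?E"
    unfolding trace_preserving_def by (simp add: mtrace_2 algebra_simps)
  moreover have "covariant E0 E1 ?E"
    unfolding covariant_def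
    by (auto intro!: mat2_eqI simp: evol_conj algebra_simps)
  moreover have "?E (gibbs \<beta> E0 E1) = gibbs \<beta> E0 E1"
    using g unfolding gibbs_stochastic_def
    by (intro mat2_eqI) (simp_all add: algebra_simps flip: of_real_mult of_real_add)
  moreover have "completely_positive ?E"
    using g c unfolding gibbs_stochastic_def by (intro covariant_qubit_map_completely_positive) auto
  ultimately show ?thesis
    by (simp add: GPC_def quantum_channel_def)
qed

lemma GPC_covariant_qubit_mapE:
  assumes "E \<in> GPC \<beta> E0 E1" "E0 \<noteq> E1"
  obtains x y c where "gibbs_stochastic (gibbs_weight \<beta> E0 E1) x y" "cmod c ^ 2 \<le> x * (1 - y)"
    and "\<And>X. X \<in> carrier_mat 2 2 \<Longrightarrow> E X = covariant_qubit_map x y c X"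
proof -
  have E: "linear_map2 E" and cp: "completely_positive E" and tp: "trace_preserving E"
    and gibbs: "E (gibbs \<beta> E0 E1) = gibbs \<beta> E0 E1" and cov: "covariant E0 E1 E"
    using assms(1) unfolding GPC_def quantum_channel_def by auto
  let ?e = "\<lambda>i j. E (mat_unit i j)"
  have choi: "psd 4 (ext_map E 2 max_entangled)"
    using cp psd_max_entangled unfolding completely_positive_def by (metis mult_2 numeral_Bit0)
  have choi_entries:
    "ext_map E 2 max_entangled $$ (0,0) = ?e 0 0 $$ (0,0)" "ext_map E 2 max_entangled $$ (0,3) = ?e 0 1 $$ (0,1)"
    "ext_map E 2 max_entangled $$ (3,0) = ?e 1 0 $$ (1,0)" "ext_map E 2 max_entangled $$ (3,3) = ?e 1 1 $$ (1,1)"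
    "ext_map E 2 max_entangled $$ (1,1) = ?e 0 0 $$ (1,1)" "ext_map E 2 max_entangled $$ (2,2) = ?e 1 1 $$ (0,0)"
    by (simp_all add: ext_map_max_entangled One_nat_def)
  note outer = psd_principal_2x2[OF choi, of 0 3, unfolded choi_entries, simplified]
  note inner = psd_principal_2x2[OF choi, of 1 2, unfolded choi_entries, simplified]
  have trace: "?e i i $$ (0,0) + ?e i i $$ (1,1) = 1" if "i < 2" for i
  proof -
    have "?e i i $$ (0,0) + ?e i i $$ (1,1) = mtrace (?e i i)"
      by (rule mtrace_2[symmetric], rule linear_map2_carrier[OF E mat_unit_carrier])
    also have "\<dots> = mtrace (mat_unit i i)"
      using tp by (simp add: trace_preserving_def)
    also have "\<dots> = 1"
      using that by (auto simp: mtrace_2 mat_unit_def dest!: less_2_cases)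
    finally show ?thesis .
  qed
  define x y c where "x = Re (?e 0 0 $$ (0,0))" and "y = Re (?e 1 1 $$ (0,0))" and "c = ?e 0 1 $$ (0,1)"
  have e: "?e 0 0 $$ (0,0) = of_real x" "?e 0 0 $$ (1,1) = of_real (1 - x)"
    "?e 1 1 $$ (0,0) = of_real y" "?e 1 1 $$ (1,1) = of_real (1 - y)" "?e 1 0 $$ (1,0) = cnj c"
    using outer inner trace[of 0] trace[of 1] unfolding x_def y_def c_def
    by (simp_all add: complex_eq_iff)
  have form: "E X = covariant_qubit_map x y c X" if "X \<in> carrier_mat 2 2" for X
    using covariant_linear_map2_eq[OF E cov assms(2) that]
    by (simp add: e c_def covariant_qubit_map_def ac_simps)
  have "Re (gibbs \<beta> E0 E1 $$ (0,0)) = Re (covariant_qubit_map x y c (gibbs \<beta> E0 E1) $$ (0,0))"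
    using form[of "gibbs \<beta> E0 E1"] gibbs by simp
  then have "gibbs_weight \<beta> E0 E1 * x + (1 - gibbs_weight \<beta> E0 E1) * y = gibbs_weight \<beta> E0 E1"
    by (simp add: algebra_simps)
  moreover have "0 \<le> x" "x \<le> 1" "0 \<le> y" "y \<le> 1" "cmod c ^ 2 \<le> x * (1 - y)"
    using outer inner by (simp_all add: e)
  ultimately show ?thesis
    using form that unfolding gibbs_stochastic_def by blast
qed

lemma GPC_convertible_qubit_iff:
  assumes "E0 \<noteq> E1"
  shows "GPC_convertible \<beta> E0 E1 (qubit r a) (qubit s b) \<longleftrightarrow>
    (\<exists>x y c. gibbs_stochastic (gibbs_weight \<beta> E0 E1) x y \<and> cmod c ^ 2 \<le> x * (1 - y) \<and>
      r * x + (1 - r) * y = s \<and> c * a = b)"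
proof
  assume "GPC_convertible \<beta> E0 E1 (qubit r a) (qubit s b)"
  then obtain E where E: "E \<in> GPC \<beta> E0 E1" "E (qubit r a) = qubit s b"
    unfolding GPC_convertible_def by blast
  obtain x y c where "gibbs_stochastic (gibbs_weight \<beta> E0 E1) x y" "cmod c ^ 2 \<le> x * (1 - y)"
    and "\<And>X. X \<in> carrier_mat 2 2 \<Longrightarrow> E X = covariant_qubit_map x y c X"
    using GPC_covariant_qubit_mapE[OF E(1) assms] by blast
  then show "\<exists>x y c. gibbs_stochastic (gibbs_weight \<beta> E0 E1) x y \<and> cmod c ^ 2 \<le> x * (1 - y) \<and>
      r * x + (1 - r) * y = s \<and> c * a = b"
    using E(2) by (auto simp: covariant_qubit_map_qubit qubit_eq_iff)
next
  assume "\<exists>x y c. gibbs_stochastic (gibbs_weight \<beta> E0 E1) x y \<and> cmod c ^ 2 \<le> x * (1 - y) \<and>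
      r * x + (1 - r) * y = s \<and> c * a = b"
  then obtain x y c where "gibbs_stochastic (gibbs_weight \<beta> E0 E1) x y" "cmod c ^ 2 \<le> x * (1 - y)"
    and "covariant_qubit_map x y c (qubit r a) = qubit s b"
    by (auto simp: covariant_qubit_map_qubit)
  then show "GPC_convertible \<beta> E0 E1 (qubit r a) (qubit s b)"
    unfolding GPC_convertible_def using covariant_qubit_map_in_GPC by blast
qed

lemma vec_of_list_2_eq_iff: "vec_of_list [a, b] = vec_of_list [c, d] \<longleftrightarrow> a = c \<and> b = d"
proof
  assume "vec_of_list [a, b] = vec_of_list [c, d]"
  then have "vec_of_list [a, b] $ 0 = vec_of_list [c, d] $ 0" "vec_of_list [a, b] $ 1 = vec_of_list [c, d] $ 1"
    by simp_all
  then show "a = c \<and> b = d"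
    unfolding vec_of_list_index by (simp add: One_nat_def)
qed simp

lemma diagv_inject: "diagv r = diagv s \<longleftrightarrow> r = s"
  by (simp add: diagv_def vec_of_list_2_eq_iff)

lemma mult_mat_vec_2:
  assumes "A \<in> carrier_mat 2 2"
  shows "A *\<^sub>v vec_of_list [u, v] =
    vec_of_list [A $$ (0,0) * u + A $$ (0,1) * v, A $$ (1,0) * u + A $$ (1,1) * (v :: 'a::comm_semiring_0)]"
proof (rule eq_vecI)
  fix i assume "i < dim_vec (vec_of_list
    [A $$ (0,0) * u + A $$ (0,1) * v, A $$ (1,0) * u + A $$ (1,1) * v])"
  then have "i = 0 \<or> i = 1" by auto
  then show "(A *\<^sub>v vec_of_list [u, v]) $ i = vec_of_list
      [A $$ (0,0) * u + A $$ (0,1) * v, A $$ (1,0) * u + A $$ (1,1) * v] $ i"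
    using assms by (auto simp: scalar_prod_def row_def vec_of_list_index sum_lessThan_2
        atLeast0LessThan One_nat_def simp del: vec_of_list_Cons)
qed (use assms in simp)

lemma rel_majorizes_diagv_iff:
  "rel_majorizes 2 (diagv r) (diagv g) (diagv s) (diagv g) \<longleftrightarrow>
    (\<exists>x y. gibbs_stochastic g x y \<and> r * x + (1 - r) * y = s)"
proof
  assume "rel_majorizes 2 (diagv r) (diagv g) (diagv s) (diagv g)"
  then obtain A where A: "A \<in> carrier_mat 2 2" "\<forall>i<2. \<forall>j<2. 0 \<le> A $$ (i, j)"
    "\<forall>j<2. (\<Sum>i<2. A $$ (i, j)) = 1" "A *\<^sub>v diagv r = diagv s" "A *\<^sub>v diagv g = diagv g"
    unfolding rel_majorizes_def by blast
  have "A $$ (1,0) = 1 - A $$ (0,0)" "A $$ (1,1) = 1 - A $$ (0,1)"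
    using A(3)[rule_format, of 0] A(3)[rule_format, of 1] by (simp_all add: sum_lessThan_2 algebra_simps)
  moreover have "0 \<le> A $$ (0,0)" "0 \<le> A $$ (0,1)" "0 \<le> A $$ (1,0)" "0 \<le> A $$ (1,1)"
    using A(2) by auto
  ultimately have "gibbs_stochastic g (A $$ (0,0)) (A $$ (0,1)) \<and> r * A $$ (0,0) + (1 - r) * A $$ (0,1) = s"
    using A(4,5) unfolding diagv_def mult_mat_vec_2[OF A(1)] vec_of_list_2_eq_iff gibbs_stochastic_def
    by (auto simp: algebra_simps)
  then show "\<exists>x y. gibbs_stochastic g x y \<and> r * x + (1 - r) * y = s"
    by blast
next
  assume "\<exists>x y. gibbs_stochastic g x y \<and> r * x + (1 - r) * y = s"
  then obtain x y where xy: "gibbs_stochastic g x y" "r * x + (1 - r) * y = s"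
    by blast
  define A where "A = mat_of_rows_list 2 [[x, y], [1 - x, 1 - y]]"
  have A: "A \<in> carrier_mat 2 2"
    by (simp add: A_def)
  show "rel_majorizes 2 (diagv r) (diagv g) (diagv s) (diagv g)"
    unfolding rel_majorizes_def
  proof (intro bexI[OF _ A] conjI allI impI)
    show "0 \<le> A $$ (i, j)" if "i < 2" "j < 2" for i j
      using xy(1) that by (auto simp: A_def gibbs_stochastic_def dest!: less_2_cases)
    show "(\<Sum>i<2. A $$ (i, j)) = 1" if "j < 2" for j
      using that by (auto simp: A_def sum_lessThan_2 dest!: less_2_cases)
    show "A *\<^sub>v diagv r = diagv s" "A *\<^sub>v diagv g = diagv g"
      using xy unfolding diagv_def mult_mat_vec_2[OF A] vec_of_list_2_eq_iff gibbs_stochastic_def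
      by (simp_all add: A_def algebra_simps)
  qed
qed

lemma stochastic_fixed_point_product:
  fixes g r s x y :: real
  assumes "g * x + (1 - g) * y = g" "r * x + (1 - r) * y = s" "r \<noteq> g"
  shows "x * (1 - y) = (s * (1 - g) - (1 - r) * g) * (r * (1 - g) - (1 - s) * g) / (r - g)\<^sup>2"
proof -
  have "x * (r - g) - (s * (1 - g) - (1 - r) * g) =
      (1 - g) * (r * x + (1 - r) * y - s) - (1 - r) * (g * x + (1 - g) * y - g)"
    "(1 - y) * (r - g) - (r * (1 - g) - (1 - s) * g) =
      g * (r * x + (1 - r) * y - s) - r * (g * x + (1 - g) * y - g)"
    by (simp_all add: algebra_simps)
  then have h: "x * (r - g) = s * (1 - g) - (1 - r) * g" "(1 - y) * (r - g) = r * (1 - g) - (1 - s) * g"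
    using assms(1,2) by simp_all
  have "x * (1 - y) * (r - g)\<^sup>2 = (x * (r - g)) * ((1 - y) * (r - g))"
    by (simp add: power2_eq_square algebra_simps)
  also have "\<dots> = (s * (1 - g) - (1 - r) * g) * (r * (1 - g) - (1 - s) * g)"
    by (simp only: h)
  finally show ?thesis
    using assms(3) by (simp add: eq_divide_eq)
qed

lemma ex_gibbs_stochastic_off_equilibrium_iff:
  assumes "r \<noteq> g"
  shows "(\<exists>x y. gibbs_stochastic g x y \<and> r * x + (1 - r) * y = s \<and> Q \<le> x * (1 - y)) \<longleftrightarrow>
    (\<exists>x y. gibbs_stochastic g x y \<and> r * x + (1 - r) * y = s) \<and>
    Q \<le> (s * (1 - g) - (1 - r) * g) * (r * (1 - g) - (1 - s) * g) / (r - g)\<^sup>2"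
    (is "?L \<longleftrightarrow> (\<exists>x y. ?P x y) \<and> Q \<le> ?D")
proof -
  have prod: "x * (1 - y) = ?D" if "?P x y" for x y
    using stochastic_fixed_point_product assms that unfolding gibbs_stochastic_def by blast
  show ?thesis
  proof
    assume ?L
    then obtain x y where xy: "?P x y" "Q \<le> x * (1 - y)"
      by blast
    then have "Q \<le> ?D"
      using prod[OF xy(1)] by simp
    with xy(1) show "(\<exists>x y. ?P x y) \<and> Q \<le> ?D"
      by blast
  next
    assume "(\<exists>x y. ?P x y) \<and> Q \<le> ?D"
    then obtain x y where xy: "?P x y" "Q \<le> ?D"
      by blast
    then have "Q \<le> x * (1 - y)"
      using prod[OF xy(1)] by simp
    with xy(1) show ?L
      by blast
  qed
qed

lemma ex_gibbs_stochastic_equilibrium_iff: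
  "(\<exists>x y. gibbs_stochastic g x y \<and> g * x + (1 - g) * y = s \<and> Q \<le> x * (1 - y)) \<longleftrightarrow>
    s = g \<and> Q \<le> 1"
proof
  assume "\<exists>x y. gibbs_stochastic g x y \<and> g * x + (1 - g) * y = s \<and> Q \<le> x * (1 - y)"
  then obtain x y where xy: "gibbs_stochastic g x y" "g * x + (1 - g) * y = s" "Q \<le> x * (1 - y)"
    by blast
  have "x * (1 - y) \<le> 1"
    using xy(1) unfolding gibbs_stochastic_def by (intro mult_le_one) auto
  then show "s = g \<and> Q \<le> 1"
    using xy unfolding gibbs_stochastic_def by auto
next
  assume "s = g \<and> Q \<le> 1"
  then show "\<exists>x y. gibbs_stochastic g x y \<and> g * x + (1 - g) * y = s \<and> Q \<le> x * (1 - y)"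
    by (intro exI[of _ 1] exI[of _ 0]) (simp add: gibbs_stochastic_def)
qed

lemma ex_mult_eq_norm_le_iff:
  fixes a b :: complex
  assumes "a \<noteq> 0"
  shows "(\<exists>c. cmod c ^ 2 \<le> P \<and> c * a = b) \<longleftrightarrow> cmod b ^ 2 / cmod a ^ 2 \<le> P"
proof -
  have "c * a = b \<longleftrightarrow> c = b / a" for c
    using assms by (auto simp: field_simps)
  then show ?thesis
    by (simp add: norm_divide power_divide)
qed

theorem theorem5:
  fixes \<beta> E0 E1 r s :: real and a b :: complex
  defines "g \<equiv> gibbs_weight \<beta> E0 E1"
  assumes "E0 \<noteq> E1"
    and "density (qubit r a)" and "density (qubit s b)"
    and "a \<noteq> 0" and "g \<noteq> 1 / 2"
  shows "(diagv r \<noteq> diagv g \<longrightarrow>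
           (GPC_convertible \<beta> E0 E1 (qubit r a) (qubit s b) \<longleftrightarrow>
              rel_majorizes 2 (diagv r) (diagv g) (diagv s) (diagv g) \<and>
              cmod b ^ 2 / cmod a ^ 2 \<le>
                det (mat_of_rows_list 2 [[s, 1 - r], [g, 1 - g]]) *
                det (mat_of_rows_list 2 [[r, 1 - s], [g, 1 - g]]) / (r - g) ^ 2))
       \<and> (diagv r = diagv g \<longrightarrow>
           (GPC_convertible \<beta> E0 E1 (qubit r a) (qubit s b) \<longleftrightarrow>
              diagv s = diagv g \<and> cmod a \<ge> cmod b))"
proof -
  have conv: "GPC_convertible \<beta> E0 E1 (qubit r a) (qubit s b) \<longleftrightarrow>
      (\<exists>x y. gibbs_stochastic g x y \<and> r * x + (1 - r) * y = s \<and>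
        cmod b ^ 2 / cmod a ^ 2 \<le> x * (1 - y))"
    unfolding GPC_convertible_qubit_iff[OF assms(2)] g_def
      ex_mult_eq_norm_le_iff[OF assms(5), symmetric] by blast
  have "cmod b ^ 2 / cmod a ^ 2 \<le> 1 \<longleftrightarrow> cmod b \<le> cmod a"
    using assms(5) by (simp add: divide_le_eq_1 power_mono_iff)
  then show ?thesis
    unfolding diagv_inject conv rel_majorizes_diagv_iff det_mat_of_rows_list_2
    using ex_gibbs_stochastic_off_equilibrium_iff ex_gibbs_stochastic_equilibrium_iff by auto
qed

end
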